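(* Let $\alpha\in(0,1)\cup(1,\infty)$ and let $W_1:X\mapsto Y_1$ and $W_2:X\mapsto Y_2$ be BISO channels with the same $\alpha$-capacity $C_\alpha$ and with $\alpha$-Lorenz curves $F_{\alpha,1}$ and $F_{\alpha,2}$ (both defined on the common interval $[0,d_C]$). Suppose $F_{\alpha,1}(t)\le F_{\alpha,2}(t)$ for all $t\in[0,d_C]$. Then: if $\alpha>1$, or $\frac12\le\alpha<1$, or $0<\alpha\le\frac13$, $W_1$ is $\alpha$-more capable than $W_2$; and if $\frac13\le\alpha\le\frac12$, $W_2$ is $\alpha$-more capable than $W_1$.
   Context: A binary input symmetric output (BISO) channel has input alphabet $\{0,1\}$ and output alphabet $\{0,\pm1,\dots,\pm l\}$ with $P_{Y|X}(y|0)=P_{Y|X}(-y|1)=:p_y$. The output $0$ (if present) is split into two outputs $0_+$ and $0_-$ with $P_{Y|X}(0_+|0)=P_{Y|X}(0_-|0)=p_0/2$ (and symmetrically for input $1$), so that the outputs are grouped into symmetric pairs $\{y,-y\}$, indexed below by "$y>0$". For $\beta>0$ let $k_\beta(q)=q^\beta+(1-q)^\beta$ for $q\in[0,1]$. Sibson's Rényi mutual information of an input distribution $P_X$ on $\{0,1\}$ and channel $P_{Y|X}$ is $I^S_\alpha(X:Y)=\frac{\alpha}{\alpha-1}\log\sum_y\big(\sum_x P_X(x)P_{Y|X}(y|x)^\alpha\big)^{1/\alpha}$; the $\alpha$-capacity is $C_\alpha(P_{Y|X})=\sup_{P_X}I^S_\alpha(X:Y)$. A channel $W_1:X\mapsto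 Y_1$ is $\alpha$-more capable than $W_2:X\mapsto Y_2$ if $I^S_\alpha(X:Y_1)\ge I^S_\alpha(X:Y_2)$ for every input distribution $P_X$. For a BISO channel, set $d_C=\sum_{y>0}(p_y^\alpha+p_{-y}^\alpha)^{1/\alpha}$ (for BISO channels $C_\alpha=\log2-\frac{\alpha}{\alpha-1}\log d_C$, so channels with equal $\alpha$-capacity have equal $d_C$). The $\alpha$-BISO partition: order the pairs $y>0$ by a permutation $\pi$ so that $k_{1/\alpha}\big(\frac{p_{\pi_i}^\alpha}{p_{\pi_i}^\alpha+p_{-\pi_i}^\alpha}\big)$ is ascending in $i$, and set $t_0=0$, $t_k=\sum_{i=1}^k(p_{\pi_i}^\alpha+p_{-\pi_i}^\alpha)^{1/\alpha}$. The $\alpha$-BISO curve is the step function $f_\alpha$ with $f_\alpha(0)=0$ and $f_\alpha(t)=k_{1/\alpha}\big(\frac{p_{\pi_k}^\alpha}{p_{\pi_k}^\alpha+p_{-\pi_k}^\alpha}\big)$ on $(t_{k-1},t_k]$. The $\alpha$-Lorenz curve is $F_\alpha(t)=\int_0^t f_\alpha(\tau)\,d\tau$ for $t\in[0,d_C]$. *)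

theory Defs
  imports "HOL-Analysis.Analysis"
begin

text \<open>A BISO channel with output alphabet {-l..l} is given by l and
  p :: int => real, where p y = P(Y=y | X=0) and P(Y=y | X=1) = p (-y).\<close>

definition BISO :: "nat \<Rightarrow> (int \<Rightarrow> real) \<Rightarrow> bool" where
  "BISO l p \<longleftrightarrow> (\<forall>y\<in>{-int l..int l}. p y \<ge> 0) \<and> (\<Sum>y\<in>{-int l..int l}. p y) = 1"

text \<open>Transition probability P_{Y|X}(y|x) for x in {0,1} (as bool: False = 0, True = 1).\<close>
definition chan :: "(int \<Rightarrow> real) \<Rightarrow> bool \<Rightarrow> int \<Rightarrow> real" where
  "chan p x y = (if x then p (-y) else p y)"

text \<open>Sibson's Renyi mutual information of input distribution P_X(0)=q, P_X(1)=1-q.\<close>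
definition sibsonMI :: "real \<Rightarrow> nat \<Rightarrow> (int \<Rightarrow> real) \<Rightarrow> real \<Rightarrow> real" where
  "sibsonMI \<alpha> l p q = \<alpha> / (\<alpha> - 1) *
     ln (\<Sum>y\<in>{-int l..int l}.
           (q * chan p False y powr \<alpha> + (1 - q) * chan p True y powr \<alpha>) powr (1 / \<alpha>))"

definition alpha_capacity :: "real \<Rightarrow> nat \<Rightarrow> (int \<Rightarrow> real) \<Rightarrow> real" where
  "alpha_capacity \<alpha> l p = (SUP q\<in>{0..1}. sibsonMI \<alpha> l p q)"

definition more_capable :: "real \<Rightarrow> nat \<Rightarrow> (int \<Rightarrow> real) \<Rightarrow> nat \<Rightarrow> (int \<Rightarrow> real) \<Rightarrow> bool" where
  "more_capable \<alpha> l1 p1 l2 p2 \<longleftrightarrow>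
     (\<forall>q\<in>{0..1}. sibsonMI \<alpha> l1 p1 q \<ge> sibsonMI \<alpha> l2 p2 q)"

definition kfun :: "real \<Rightarrow> real \<Rightarrow> real" where
  "kfun \<beta> q = q powr \<beta> + (1 - q) powr \<beta>"

text \<open>Symmetric pairs (p_y, p_{-y}) for y > 0, output 0 split into 0_+ and 0_- .\<close>
definition biso_pairs :: "nat \<Rightarrow> (int \<Rightarrow> real) \<Rightarrow> (real \<times> real) list" where
  "biso_pairs l p = (p 0 / 2, p 0 / 2) # map (\<lambda>y. (p y, p (-y))) [1..int l]"

definition pair_width :: "real \<Rightarrow> real \<times> real \<Rightarrow> real" where
  "pair_width \<alpha> ab = (fst ab powr \<alpha> + snd ab powr \<alpha>) powr (1 / \<alpha>)"

definition pair_height :: "real \<Rightarrow> real \<times> real \<Rightarrow> real" where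
  "pair_height \<alpha> ab =
     kfun (1 / \<alpha>) (fst ab powr \<alpha> / (fst ab powr \<alpha> + snd ab powr \<alpha>))"

definition dC :: "real \<Rightarrow> nat \<Rightarrow> (int \<Rightarrow> real) \<Rightarrow> real" where
  "dC \<alpha> l p = (\<Sum>ab\<leftarrow>biso_pairs l p. pair_width \<alpha> ab)"

definition sorted_pairs :: "real \<Rightarrow> nat \<Rightarrow> (int \<Rightarrow> real) \<Rightarrow> (real \<times> real) list" where
  "sorted_pairs \<alpha> l p = sort_key (pair_height \<alpha>) (biso_pairs l p)"

definition tpt :: "real \<Rightarrow> nat \<Rightarrow> (int \<Rightarrow> real) \<Rightarrow> nat \<Rightarrow> real" where
  "tpt \<alpha> l p k = (\<Sum>ab\<leftarrow>take k (sorted_pairs \<alpha> l p). pair_width \<alpha> ab)"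

definition biso_curve :: "real \<Rightarrow> nat \<Rightarrow> (int \<Rightarrow> real) \<Rightarrow> real \<Rightarrow> real" where
  "biso_curve \<alpha> l p t =
     (\<Sum>k<length (sorted_pairs \<alpha> l p).
        if tpt \<alpha> l p k < t \<and> t \<le> tpt \<alpha> l p (Suc k)
        then pair_height \<alpha> (sorted_pairs \<alpha> l p ! k) else 0)"

definition lorenz :: "real \<Rightarrow> nat \<Rightarrow> (int \<Rightarrow> real) \<Rightarrow> real \<Rightarrow> real" where
  "lorenz \<alpha> l p t = integral {0..t} (biso_curve \<alpha> l p)"

end

theory Submission
  imports Defs
begin

(* Put b = 1 / alpha and kc b s = (1/2 + s) powr b + (1/2 - s) powr b, so that kfun b q = kc b (q - 1/2).
   For a BISO channel Sibson's information is alpha / (alpha - 1) * ln S(q), where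
   S(q) = sum_k w_k * kc b (c * s_k) with c = |2q - 1|; the w_k are the widths and the kc b s_k the
   heights of the alpha-BISO curve. Thus the capacity is attained at q = 1/2, and channels with equal
   capacity have equal d_C.
   For fixed c, kc b (c * s) is a convex or a concave function of the height kc b s: its derivative
   with respect to the height is monotone in s, in the direction given by the sign of (b - 2)(3 - b),
   because the elasticity s * kc'' b s / kc' b s of kc' b is monotone. The comparison of S for the two
   channels is then a majorization argument: cut the steps of W1 along the breakpoints of W2, bound the
   values on W1 from below by the supporting lines at the heights of W2, and sum the (monotone) slopes
   of these lines by parts against the difference of the two Lorenz curves, which has constant sign. *)

lemma mult_nonneg_if_sgn_eq:
  fixes x y :: real
  assumes "sgn x = sgn y"
  shows "0 \<le> x * y"
  by (metis assms sgn_mult zero_le_sgn_iff zero_le_square)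

lemma sgn_one_minus_powr:
  fixes r p :: real
  assumes "0 < r" "r < 1"
  shows "sgn (1 - r powr p) = sgn p"
proof (cases p "0::real" rule: linorder_cases)
  case less
  then have "1 < r powr p" using assms powr_less_mono2_neg[of p r 1] by simp
  then show ?thesis using less by simp
next
  case greater
  then have "r powr p < 1" using assms powr_less_mono2[of p r 1] by simp
  then show ?thesis using greater by simp
qed (use assms in simp)

lemma cauchy_mean_value:
  fixes f g f' g' :: "real \<Rightarrow> real"
  assumes "a < b" "continuous_on {a..b} f" "continuous_on {a..b} g"
    and "\<And>x. a < x \<Longrightarrow> x < b \<Longrightarrow> (f has_real_derivative f' x) (at x)"
    and "\<And>x. a < x \<Longrightarrow> x < b \<Longrightarrow> (g has_real_derivative g' x) (at x)"
  obtains z where "a < z" "z < b" "(f b - f a) * g' z = (g b - g a) * f' z"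
proof -
  define h where "h x = (f b - f a) * g x - (g b - g a) * f x" for x
  have "continuous_on {a..b} h"
    unfolding h_def using assms by (auto intro!: continuous_intros)
  moreover have hd: "(h has_real_derivative (f b - f a) * g' x - (g b - g a) * f' x) (at x)"
    if "a < x" "x < b" for x
    unfolding h_def using assms that by (auto intro!: derivative_eq_intros)
  ultimately obtain l z where z: "a < z" "z < b" "(h has_real_derivative l) (at z)"
    and "h b - h a = (b - a) * l"
    using MVT[OF assms(1)] real_differentiable_def by meson
  moreover have "h b = h a" unfolding h_def by (simp add: algebra_simps)
  ultimately have "l = 0" using assms(1) by simp
  moreover have "l = (f b - f a) * g' z - (g b - g a) * f' z"
    using DERIV_unique[OF z(3) hd[OF z(1,2)]] .
  ultimately show ?thesis using that z(1,2) by simp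
qed

section \<open>The symmetric power sum kc\<close>

definition kc :: "real \<Rightarrow> real \<Rightarrow> real" where
  "kc b s = (1/2 + s) powr b + (1/2 - s) powr b"

definition kc' :: "real \<Rightarrow> real \<Rightarrow> real" where
  "kc' b s = b * ((1/2 + s) powr (b - 1) - (1/2 - s) powr (b - 1))"

definition kc'' :: "real \<Rightarrow> real \<Rightarrow> real" where
  "kc'' b s = b * (b - 1) * ((1/2 + s) powr (b - 2) + (1/2 - s) powr (b - 2))"

lemma kfun_eq_kc: "kfun b q = kc b (q - 1/2)"
  unfolding kfun_def kc_def by simp

lemma kc_abs: "kc b \<bar>s\<bar> = kc b s"
  unfolding kc_def by (cases "s \<ge> 0") (auto simp: add.commute)

lemma kc'_0 [simp]: "kc' b 0 = 0"
  unfolding kc'_def by simp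

lemma has_real_derivative_kc:
  assumes "-1/2 < s" "s < 1/2"
  shows "(kc b has_real_derivative kc' b s) (at s)"
  unfolding kc_def kc'_def using assms
  by (auto intro!: derivative_eq_intros simp: algebra_simps)

lemma has_real_derivative_kc':
  assumes "-1/2 < s" "s < 1/2"
  shows "(kc' b has_real_derivative kc'' b s) (at s)"
  unfolding kc'_def kc''_def using assms
  by (auto intro!: derivative_eq_intros simp: algebra_simps)

lemma continuous_on_kc:
  assumes "0 < b"
  shows "continuous_on {-1/2..1/2} (kc b)"
  unfolding kc_def using assms
  by (intro continuous_on_add continuous_on_powr') (auto intro!: continuous_intros)

lemma sgn_kc':
  assumes "0 < b" "0 < s" "s < 1/2"
  shows "sgn (kc' b s) = sgn (b - 1)"
proof -
  consider "b < 1" | "b = 1" | "b > 1" by linarith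
  then show ?thesis
  proof cases
    case 1
    then have "(1/2 + s) powr (b - 1) < (1/2 - s) powr (b - 1)"
      using assms by (intro powr_less_mono2_neg) auto
    then show ?thesis using 1 assms by (simp add: kc'_def sgn_mult)
  next
    case 3
    then have "(1/2 - s) powr (b - 1) < (1/2 + s) powr (b - 1)"
      using assms by (intro powr_less_mono2) auto
    then show ?thesis using 3 assms by (simp add: kc'_def sgn_mult)
  qed (use assms in \<open>simp add: kc'_def\<close>)
qed

lemma kc'_sgn_mono:
  assumes "0 < b" "-1/2 < x" "x \<le> y" "y < 1/2"
  shows "sgn (b - 1) * kc' b x \<le> sgn (b - 1) * kc' b y"
proof (rule DERIV_nonneg_imp_nondecreasing[OF \<open>x \<le> y\<close>])
  fix z assume "x \<le> z" "z \<le> y"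
  then have "((\<lambda>s. sgn (b - 1) * kc' b s) has_real_derivative sgn (b - 1) * kc'' b z) (at z)"
    using assms by (intro DERIV_cmult has_real_derivative_kc') auto
  moreover have "sgn (b - 1) * kc'' b z = b * \<bar>b - 1\<bar> * ((1/2 + z) powr (b - 2) + (1/2 - z) powr (b - 2))"
    by (simp add: kc''_def abs_sgn)
  then have "0 \<le> sgn (b - 1) * kc'' b z"
    using assms by simp
  ultimately show "\<exists>d. ((\<lambda>s. sgn (b - 1) * kc' b s) has_real_derivative d) (at z) \<and> 0 \<le> d"
    by blast
qed

lemma sgn_kc_diff:
  assumes "0 < b" "0 \<le> s1" "s1 < s2" "s2 \<le> 1/2"
  shows "sgn (kc b s2 - kc b s1) = sgn (b - 1)"
proof -
  have "continuous_on {s1..s2} (kc b)"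
    using continuous_on_kc[OF assms(1)] assms by (auto elim: continuous_on_subset)
  moreover have "kc b differentiable (at x)" if "s1 < x" "x < s2" for x
    using has_real_derivative_kc[of x b] that assms real_differentiable_def by force
  ultimately obtain d z where z: "s1 < z" "z < s2" "(kc b has_real_derivative d) (at z)"
    and diff: "kc b s2 - kc b s1 = (s2 - s1) * d"
    using MVT[OF assms(3)] by blast
  have "d = kc' b z"
    using DERIV_unique[OF z(3) has_real_derivative_kc] z assms by auto
  then show ?thesis
    using diff sgn_kc'[of b z] z assms by (simp add: sgn_mult)
qed

lemma kc_sgn_mono:
  assumes "0 < b" "0 \<le> s1" "s1 \<le> s2" "s2 \<le> 1/2"
  shows "0 \<le> sgn (b - 1) * (kc b s2 - kc b s1)"
proof (cases "s1 = s2")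
  case False
  then show ?thesis
    using sgn_kc_diff[of b s1 s2] assms by (intro mult_nonneg_if_sgn_eq) simp
qed simp

(* The derivative of kc b (c * s) with respect to kc b s. *)
definition kc_slope :: "real \<Rightarrow> real \<Rightarrow> real \<Rightarrow> real" where
  "kc_slope b c s = c * kc' b (c * s) / kc' b s"

lemma kc_slope_bounds:
  assumes "0 < b" "0 \<le> c" "c \<le> 1" "0 < s" "s < 1/2"
  shows "0 \<le> kc_slope b c s \<and> kc_slope b c s \<le> 1"
proof (cases "b = 1")
  case True
  then show ?thesis using assms by (simp add: kc_slope_def kc'_def)
next
  case False
  define \<eta> where "\<eta> = sgn (b - 1)"
  have "\<eta> \<noteq> 0" using False by (simp add: \<eta>_def sgn_0_0)
  have "sgn (\<eta> * kc' b s) = 1"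
    using sgn_kc'[OF assms(1,4,5)] False by (simp add: \<eta>_def sgn_mult)
  then have pos: "0 < \<eta> * kc' b s" by (simp add: sgn_1_pos)
  have cs: "0 \<le> c * s" "c * s \<le> s"
    using assms by (auto intro: mult_left_le_one_le)
  have lo: "0 \<le> \<eta> * kc' b (c * s)"
    using kc'_sgn_mono[of b 0 "c * s"] cs assms by (simp add: \<eta>_def)
  have hi: "\<eta> * kc' b (c * s) \<le> \<eta> * kc' b s"
    using kc'_sgn_mono[of b "c * s" s] cs assms by (simp add: \<eta>_def)
  have "0 \<le> (\<eta> * kc' b (c * s)) / (\<eta> * kc' b s)"
    using lo pos by (rule divide_nonneg_pos)
  moreover have "(\<eta> * kc' b (c * s)) / (\<eta> * kc' b s) \<le> 1"
    using hi pos by (metis divide_le_eq_1_pos)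
  moreover have "kc_slope b c s = c * ((\<eta> * kc' b (c * s)) / (\<eta> * kc' b s))"
    using \<open>\<eta> \<noteq> 0\<close> by (simp add: kc_slope_def)
  ultimately show ?thesis
    using assms by (simp add: mult_le_one)
qed

lemma kc_scaled_mean_value:
  assumes "0 < b" "b \<noteq> 1" "0 \<le> c" "c \<le> 1" "0 \<le> s1" "s1 < s2" "s2 \<le> 1/2"
  obtains z where "s1 < z" "z < s2"
    "kc b (c * s2) - kc b (c * s1) = kc_slope b c z * (kc b s2 - kc b s1)"
proof -
  have scaled: "0 \<le> c * x \<and> c * x \<le> x" if "0 \<le> x" for x
    using that assms by (auto intro: mult_left_le_one_le)
  have "c * x \<in> {-1/2..1/2}" if "x \<in> {s1..s2}" for x
  proof -
    from that have x: "s1 \<le> x" "x \<le> s2" by auto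
    have "0 \<le> c * x" "c * x \<le> x" using scaled[of x] x assms by auto
    then show ?thesis using x assms by (simp only: atLeastAtMost_iff) linarith
  qed
  then have "continuous_on {s1..s2} (\<lambda>s. kc b (c * s))"
    by (intro continuous_on_compose2[OF continuous_on_kc[OF assms(1)]] continuous_intros) auto
  moreover have "continuous_on {s1..s2} (kc b)"
    using continuous_on_kc[OF assms(1)] assms by (auto elim: continuous_on_subset)
  moreover have "((\<lambda>s. kc b (c * s)) has_real_derivative c * kc' b (c * x)) (at x)"
    if "s1 < x" "x < s2" for x
  proof -
    have "0 \<le> c * x" "c * x \<le> x" using scaled[of x] that assms by auto
    then have "-1/2 < c * x" "c * x < 1/2" using that assms by linarith+
    from DERIV_chain2[OF has_real_derivative_kc[OF this] DERIV_cmult_Id[of c x]]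
    show ?thesis by (simp add: mult.commute)
  qed
  moreover have "(kc b has_real_derivative kc' b x) (at x)" if "s1 < x" "x < s2" for x
    using has_real_derivative_kc that assms by simp
  ultimately obtain z where z: "s1 < z" "z < s2"
    "(kc b (c * s2) - kc b (c * s1)) * kc' b z = (kc b s2 - kc b s1) * (c * kc' b (c * z))"
    by (rule cauchy_mean_value[OF assms(6)])
  have "kc' b z \<noteq> 0"
    using sgn_kc'[of b z] z assms by (auto simp: sgn_0_0)
  with z show ?thesis
    using that by (simp add: kc_slope_def field_simps)
qed

section \<open>Monotonicity of the slope\<close>

(* With r = exp (-u) this is 2 * (d * sinh u - sinh (d * u)). *)
definition sinh_gap :: "real \<Rightarrow> real \<Rightarrow> real" where
  "sinh_gap d r = d * (1/r - r) + r powr d - r powr (-d)"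

lemma has_real_derivative_sinh_gap:
  assumes "0 < r"
  shows "(sinh_gap d has_real_derivative
           - (d / r\<^sup>2) * (1 - r powr (1 + d)) * (1 - r powr (1 - d))) (at r)"
proof -
  define P where "P = r powr d"
  have P: "0 < P" using assms by (simp add: P_def)
  have "(sinh_gap d has_real_derivative
          d * (-1/r\<^sup>2 - 1) + d * r powr (d - 1) + d * r powr (-d - 1)) (at r)"
    unfolding sinh_gap_def using assms
    by (auto intro!: derivative_eq_intros simp: power2_eq_square field_simps)
  moreover have "d * (-1/r\<^sup>2 - 1) + d * r powr (d - 1) + d * r powr (-d - 1)
      = - (d / r\<^sup>2) * (1 - r powr (1 + d)) * (1 - r powr (1 - d))"
  proof -
    have e: "r powr (d - 1) = P / r" "r powr (-d - 1) = 1 / (P * r)"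
      "r powr (1 + d) = r * P" "r powr (1 - d) = r / P"
      using assms by (simp_all add: P_def powr_diff powr_add powr_minus field_simps)
    show ?thesis
      unfolding e using P assms by (simp add: field_simps power2_eq_square)
  qed
  ultimately show ?thesis by simp
qed

lemma sinh_gap_sign:
  assumes "0 \<le> \<epsilon> * (d * (1 - d))" "0 < r" "r \<le> 1"
  shows "0 \<le> \<epsilon> * ((1 + d) * sinh_gap d r)"
proof -
  have "\<epsilon> * ((1 + d) * sinh_gap d 1) \<le> \<epsilon> * ((1 + d) * sinh_gap d r)"
  proof (rule DERIV_nonpos_imp_nonincreasing[OF \<open>r \<le> 1\<close>])
    fix x assume x: "r \<le> x" "x \<le> 1"
    have A: "0 \<le> (1 + d) * (1 - x powr (1 + d))" and B: "0 \<le> \<epsilon> * (d * (1 - x powr (1 - d)))"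
    proof -
      consider "x = 1" | "x < 1" using x by linarith
      then have "0 \<le> (1 + d) * (1 - x powr (1 + d)) \<and> 0 \<le> \<epsilon> * (d * (1 - x powr (1 - d)))"
      proof cases
        case 2
        then have "sgn (1 - x powr (1 + d)) = sgn (1 + d)" "sgn (1 - x powr (1 - d)) = sgn (1 - d)"
          using sgn_one_minus_powr[of x] x assms(2) by auto
        then have "sgn ((1 + d) * (1 - x powr (1 + d))) = sgn (1 + d) * sgn (1 + d)"
          "sgn (\<epsilon> * (d * (1 - x powr (1 - d)))) = sgn (\<epsilon> * (d * (1 - d)))"
          by (simp_all add: sgn_mult)
        moreover have "0 \<le> sgn (1 + d) * sgn (1 + d)" by (rule zero_le_square)
        moreover have "0 \<le> sgn (\<epsilon> * (d * (1 - d)))" using assms(1) by (simp only: zero_le_sgn_iff)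
        ultimately show ?thesis by (metis zero_le_sgn_iff)
      qed simp
      then show "0 \<le> (1 + d) * (1 - x powr (1 + d))" "0 \<le> \<epsilon> * (d * (1 - x powr (1 - d)))"
        by auto
    qed
    have "((\<lambda>x. \<epsilon> * ((1 + d) * sinh_gap d x)) has_real_derivative
            - ((1 + d) * (1 - x powr (1 + d))) * (\<epsilon> * (d * (1 - x powr (1 - d)))) / x\<^sup>2) (at x)"
    proof -
      have "0 < x" using x assms(2) by linarith
      from DERIV_cmult[OF DERIV_cmult[OF has_real_derivative_sinh_gap[OF this, of d],
          where c = "1 + d"], where c = \<epsilon>]
      show ?thesis by (rule DERIV_cong) (use \<open>0 < x\<close> in \<open>simp add: field_simps\<close>)
    qed
    moreover have "- ((1 + d) * (1 - x powr (1 + d))) * (\<epsilon> * (d * (1 - x powr (1 - d)))) / x\<^sup>2 \<le> 0"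
      using A B by (simp add: divide_nonpos_pos)
    ultimately show "\<exists>y. ((\<lambda>x. \<epsilon> * ((1 + d) * sinh_gap d x)) has_real_derivative y) (at x) \<and> y \<le> 0"
      by blast
  qed
  then show ?thesis by (simp add: sinh_gap_def)
qed

definition kc'_elasticity :: "real \<Rightarrow> real \<Rightarrow> real" where
  "kc'_elasticity b s = s * kc'' b s / kc' b s"

definition elasticity_in_ratio :: "real \<Rightarrow> real \<Rightarrow> real" where
  "elasticity_in_ratio b r = (b - 1) / 2 * ((1 - r) * (1 + r powr (b - 2))) / (1 - r powr (b - 1))"

lemma kc'_elasticity_eq_in_ratio:
  assumes "0 < b" "b \<noteq> 1" "0 < s" "s < 1/2"
  shows "kc'_elasticity b s = elasticity_in_ratio b ((1/2 - s) / (1/2 + s))"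
proof -
  define a where "a = 1/2 + s"
  define r where "r = (1/2 - s) / (1/2 + s)"
  have a: "0 < a" "1/2 - s = r * a" "s = a * (1 - r) / 2"
    using assms by (auto simp: a_def r_def field_simps)
  have r: "0 < r" "r < 1" using assms by (auto simp: r_def field_simps)
  have nz: "1 - r powr (b - 1) \<noteq> 0"
    using sgn_one_minus_powr[OF r, of "b - 1"] assms by (auto simp: sgn_0_0)
  have p: "(r * a) powr (b - 2) = r powr (b - 2) * a powr (b - 2)"
    "(r * a) powr (b - 1) = r powr (b - 1) * a powr (b - 1)"
    "a powr (b - 1) = a powr (b - 2) * a"
    using a r powr_add[of a "b - 2" 1] by (simp_all add: powr_mult)
  have "kc'_elasticity b s = a * (1 - r) / 2 * (b * (b - 1) * (a powr (b - 2) + r powr (b - 2) * a powr (b - 2)))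
      / (b * (a powr (b - 2) * a - r powr (b - 1) * (a powr (b - 2) * a)))"
    unfolding kc'_elasticity_def kc''_def kc'_def a_def[symmetric] a(2) p
    by (subst (1) a(3)) simp
  also have "\<dots> = elasticity_in_ratio b r"
    unfolding elasticity_in_ratio_def using a r nz assms by (simp add: field_simps)
  finally show ?thesis by (simp add: r_def)
qed

lemma has_real_derivative_elasticity_in_ratio:
  assumes "0 < r" "r < 1" "b \<noteq> 1"
  shows "(elasticity_in_ratio b has_real_derivative
           r powr (b - 2) / (2 * (1 - r powr (b - 1))\<^sup>2) * ((b - 1) * sinh_gap (b - 2) r)) (at r)"
proof -
  define P where "P = r powr (b - 2)"
  have P: "0 < P" using assms by (simp add: P_def)
  have e: "r powr (b - 2 - 1) = P / r" "r powr (b - 1) = r * P" "r powr (b - 1 - 1) = P"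
    "r powr (-(b - 2)) = 1 / P"
  proof -
    show "r powr (b - 2 - 1) = P / r"
      by (subst powr_diff) (use assms in \<open>simp_all add: P_def\<close>)
    show "r powr (b - 1) = r * P"
      using powr_add[of r "b - 2" 1] assms by (simp add: P_def)
    show "r powr (b - 1 - 1) = P"
      by (simp add: P_def)
    show "r powr (-(b - 2)) = 1 / P"
      by (subst powr_minus) (simp add: P_def divide_inverse)
  qed
  have nz: "1 - r powr (b - 1) \<noteq> 0"
    using sgn_one_minus_powr[OF assms(1,2), of "b - 1"] assms(3) by (auto simp: sgn_0_0)
  have "((\<lambda>x. (1 - x) * (1 + x powr (b - 2))) has_real_derivative
      - (1 + r powr (b - 2)) + (1 - r) * ((b - 2) * r powr (b - 2 - 1))) (at r)"
    using assms by (auto intro!: derivative_eq_intros simp: algebra_simps)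
  then have dN: "((\<lambda>x. (1 - x) * (1 + x powr (b - 2))) has_real_derivative
      - (1 + P) + (1 - r) * ((b - 2) * (P / r))) (at r)"
    unfolding e(1) P_def[symmetric] .
  have "((\<lambda>x. 1 - x powr (b - 1)) has_real_derivative - ((b - 1) * r powr (b - 1 - 1))) (at r)"
    using assms by (auto intro!: derivative_eq_intros simp: algebra_simps)
  then have dD: "((\<lambda>x. 1 - x powr (b - 1)) has_real_derivative - ((b - 1) * P)) (at r)"
    unfolding e(3) .
  have numerator: "(- (1 + P) + (1 - r) * ((b - 2) * (P / r))) * (1 - r * P)
      - - ((b - 1) * P) * ((1 - r) * (1 + P)) = P * sinh_gap (b - 2) r"
    unfolding sinh_gap_def e(4) P_def[symmetric] using P assms by (simp add: field_simps)
  have "elasticity_in_ratio b = (\<lambda>x. (b - 1) / 2 * ((1 - x) * (1 + x powr (b - 2)) / (1 - x powr (b - 1))))"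
    by (simp add: elasticity_in_ratio_def fun_eq_iff)
  with DERIV_cmult[OF DERIV_quotient[OF dN dD nz], of "(b - 1) / 2"]
  have "(elasticity_in_ratio b has_real_derivative
      (b - 1) / 2 * (P * sinh_gap (b - 2) r / (1 - r * P) ^ Suc (Suc 0))) (at r)"
    unfolding e(2) P_def[symmetric] numerator by simp
  then show ?thesis
    by (rule DERIV_cong) (simp add: e(2) P_def[symmetric] power2_eq_square)
qed

lemma elasticity_in_ratio_mono:
  assumes "0 \<le> \<epsilon> * ((b - 2) * (3 - b))" "b \<noteq> 1"
    and "0 < r1" "r1 \<le> r2" "r2 < 1"
  shows "\<epsilon> * elasticity_in_ratio b r1 \<le> \<epsilon> * elasticity_in_ratio b r2"
proof (rule DERIV_nonneg_imp_nondecreasing[OF \<open>r1 \<le> r2\<close>])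
  fix x assume x: "r1 \<le> x" "x \<le> r2"
  then have "0 < x" "x < 1" using assms by auto
  \<comment> \<open>for d = b - 2 we have 1 + d = b - 1 and d * (1 - d) = (b - 2) * (3 - b)\<close>
  have "0 \<le> \<epsilon> * ((b - 1) * sinh_gap (b - 2) x)"
    using sinh_gap_sign[of \<epsilon> "b - 2" x] assms \<open>0 < x\<close> \<open>x < 1\<close> by (simp add: algebra_simps)
  then have "0 \<le> x powr (b - 2) / (2 * (1 - x powr (b - 1))\<^sup>2) * (\<epsilon> * ((b - 1) * sinh_gap (b - 2) x))"
    by (rule mult_nonneg_nonneg[rotated]) simp
  moreover have "((\<lambda>r. \<epsilon> * elasticity_in_ratio b r) has_real_derivative
      \<epsilon> * (x powr (b - 2) / (2 * (1 - x powr (b - 1))\<^sup>2) * ((b - 1) * sinh_gap (b - 2) x))) (at x)"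
    using has_real_derivative_elasticity_in_ratio[OF \<open>0 < x\<close> \<open>x < 1\<close> assms(2)] by (rule DERIV_cmult)
  ultimately show "\<exists>y. ((\<lambda>r. \<epsilon> * elasticity_in_ratio b r) has_real_derivative y) (at x) \<and> 0 \<le> y"
    by (metis mult.left_commute)
qed

lemma kc'_elasticity_antimono:
  assumes "0 \<le> \<epsilon> * ((b - 2) * (3 - b))" "0 < b" "b \<noteq> 1"
    and "0 < s1" "s1 \<le> s2" "s2 < 1/2"
  shows "\<epsilon> * kc'_elasticity b s2 \<le> \<epsilon> * kc'_elasticity b s1"
proof -
  have "0 < (1/2 - s2) / (1/2 + s2)" "(1/2 - s2) / (1/2 + s2) \<le> (1/2 - s1) / (1/2 + s1)"
    "(1/2 - s1) / (1/2 + s1) < 1"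
    using assms by (auto simp: field_simps)
  then show ?thesis
    using elasticity_in_ratio_mono[OF assms(1,3)] kc'_elasticity_eq_in_ratio[of b] assms by simp
qed

lemma has_real_derivative_kc_slope:
  assumes "0 < b" "b \<noteq> 1" "0 < c" "c \<le> 1" "0 < s" "s < 1/2"
  shows "(kc_slope b c has_real_derivative
           kc_slope b c s * (kc'_elasticity b (c * s) - kc'_elasticity b s) / s) (at s)"
proof -
  have "c * s \<le> s"
    using assms by (intro mult_left_le_one_le) auto
  then have cs: "0 < c * s" "c * s < 1/2"
    using assms by (simp, linarith)
  have nz: "kc' b s \<noteq> 0" "kc' b (c * s) \<noteq> 0"
    using sgn_kc'[of b s] sgn_kc'[of b "c * s"] cs assms by (auto simp: sgn_0_0)
  have "((\<lambda>x. c * kc' b (c * x)) has_real_derivative c * (kc'' b (c * s) * c)) (at s)"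
    using cs by (intro DERIV_cmult DERIV_chain2[OF has_real_derivative_kc' DERIV_cmult_Id]) auto
  from DERIV_quotient[OF this has_real_derivative_kc' nz(1)] assms
  have "(kc_slope b c has_real_derivative
      (c * (kc'' b (c * s) * c) * kc' b s - kc'' b s * (c * kc' b (c * s))) / (kc' b s)\<^sup>2) (at s)"
    by (simp add: kc_slope_def[abs_def] power2_eq_square)
  then show ?thesis
    by (rule DERIV_cong) (use nz assms in \<open>simp add: kc_slope_def kc'_elasticity_def field_simps power2_eq_square\<close>)
qed

lemma kc_slope_mono:
  assumes "0 \<le> \<epsilon> * ((b - 2) * (3 - b))" "0 < b" "b \<noteq> 1"
    and "0 \<le> c" "c \<le> 1" "0 < s1" "s1 \<le> s2" "s2 < 1/2"
  shows "\<epsilon> * kc_slope b c s1 \<le> \<epsilon> * kc_slope b c s2"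
proof (cases "c = 0")
  case True
  then show ?thesis by (simp add: kc_slope_def)
next
  case False
  show ?thesis
  proof (rule DERIV_nonneg_imp_nondecreasing[OF \<open>s1 \<le> s2\<close>])
    fix x assume "s1 \<le> x" "x \<le> s2"
    then have x: "0 < x" "x < 1/2" using assms by auto
    have "0 < c * x" "c * x \<le> x"
      using x assms False by (auto intro: mult_left_le_one_le)
    then have "0 \<le> \<epsilon> * (kc'_elasticity b (c * x) - kc'_elasticity b x)"
      using kc'_elasticity_antimono[OF assms(1-3), of "c * x" x] x by (simp add: algebra_simps)
    moreover have "0 \<le> kc_slope b c x / x"
      using kc_slope_bounds[of b c x] x assms by simp
    ultimately have "0 \<le> \<epsilon> * (kc_slope b c x * (kc'_elasticity b (c * x) - kc'_elasticity b x) / x)"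
      by (metis mult_nonneg_nonneg times_divide_eq_left mult.commute mult.left_commute)
    moreover have "((\<lambda>s. \<epsilon> * kc_slope b c s) has_real_derivative
        \<epsilon> * (kc_slope b c x * (kc'_elasticity b (c * x) - kc'_elasticity b x) / x)) (at x)"
      using has_real_derivative_kc_slope[of b c x] x assms False by (intro DERIV_cmult) auto
    ultimately show "\<exists>y. ((\<lambda>s. \<epsilon> * kc_slope b c s) has_real_derivative y) (at x) \<and> 0 \<le> y"
      by blast
  qed
qed

(* \<epsilon> \<in> {-1, 1} records the sign of (b - 2) * (3 - b), the direction in which kc_slope is
   monotone; at b = 2 and b = 3 both choices are allowed. At s = 0 and s = 1/2, where kc_slope is
   not a derivative, support_slope takes the end of the range [0, 1] that keeps it monotone. *)
definition support_slope :: "real \<Rightarrow> real \<Rightarrow> real \<Rightarrow> real \<Rightarrow> real" where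
  "support_slope \<epsilon> b c s =
     (if s = 0 then (1 - \<epsilon>) / 2 else if s = 1/2 then (1 + \<epsilon>) / 2 else kc_slope b c s)"

lemma support_slope_mono:
  assumes "\<epsilon> \<in> {-1, 1}" "0 \<le> \<epsilon> * ((b - 2) * (3 - b))" "0 < b" "b \<noteq> 1"
    and "0 \<le> c" "c \<le> 1" "0 \<le> s1" "s1 \<le> s2" "s2 \<le> 1/2"
  shows "\<epsilon> * support_slope \<epsilon> b c s1 \<le> \<epsilon> * support_slope \<epsilon> b c s2"
proof -
  have bounds: "0 \<le> kc_slope b c s \<and> kc_slope b c s \<le> 1" if "0 < s" "s < 1/2" for s
    using kc_slope_bounds[of b c s] that assms by simp
  consider "s1 = s2" | "s1 = 0" "0 < s2" "s2 < 1/2" | "s1 = 0" "s2 = 1/2"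
    | "0 < s1" "s1 < 1/2" "s2 = 1/2" | "0 < s1" "s1 < s2" "s2 < 1/2"
    using assms by linarith
  then show ?thesis
  proof cases
    case 2
    then show ?thesis using bounds[of s2] assms(1) by (auto simp: support_slope_def)
  next
    case 3
    then show ?thesis using assms(1) by (auto simp: support_slope_def)
  next
    case 4
    then show ?thesis using bounds[of s1] assms(1) by (auto simp: support_slope_def)
  next
    case 5
    then show ?thesis using kc_slope_mono[OF assms(2-6), of s1 s2] by (simp add: support_slope_def)
  qed simp
qed

lemma support_line:
  assumes "\<epsilon> \<in> {-1, 1}" "0 \<le> \<epsilon> * ((b - 2) * (3 - b))" "0 < b" "b \<noteq> 1"
    and "0 \<le> c" "c \<le> 1" "0 \<le> s" "s \<le> 1/2" "0 \<le> s0" "s0 \<le> 1/2"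
  shows "0 \<le> \<epsilon> * sgn (b - 1) *
    (kc b (c * s) - kc b (c * s0) - support_slope \<epsilon> b c s0 * (kc b s - kc b s0))"
proof -
  let ?g = "support_slope \<epsilon> b c"
  have chord: "\<epsilon> * sgn (b - 1) * (kc b (c * s) - kc b (c * s0) - ?g s0 * (kc b s - kc b s0))
      = (\<epsilon> * (?g z - ?g s0)) * (sgn (b - 1) * (kc b s - kc b s0))"
    if "kc b (c * s) - kc b (c * s0) = kc_slope b c z * (kc b s - kc b s0)" "0 < z" "z < 1/2" for z
    using that(2,3) unfolding that(1) by (simp add: support_slope_def algebra_simps)
  consider "s0 < s" | "s = s0" | "s < s0" by linarith
  then show ?thesis
  proof cases
    case 1
    then obtain z where z: "s0 < z" "z < s"
      "kc b (c * s) - kc b (c * s0) = kc_slope b c z * (kc b s - kc b s0)"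
      using kc_scaled_mean_value[OF assms(3-6,9)] assms(8) by blast
    have "0 \<le> \<epsilon> * (?g z - ?g s0)"
      using support_slope_mono[OF assms(1-6), of s0 z] z assms by (simp add: right_diff_distrib)
    moreover have "0 \<le> sgn (b - 1) * (kc b s - kc b s0)"
      using kc_sgn_mono[of b s0 s] 1 assms by simp
    moreover have "\<epsilon> * sgn (b - 1) * (kc b (c * s) - kc b (c * s0) - ?g s0 * (kc b s - kc b s0))
        = (\<epsilon> * (?g z - ?g s0)) * (sgn (b - 1) * (kc b s - kc b s0))"
      using z assms by (intro chord) auto
    ultimately show ?thesis by (metis mult_nonneg_nonneg)
  next
    case 3
    then obtain z where z: "s < z" "z < s0"
      "kc b (c * s0) - kc b (c * s) = kc_slope b c z * (kc b s0 - kc b s)"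
      using kc_scaled_mean_value[OF assms(3-7) _ assms(10)] by blast
    have "\<epsilon> * (?g z - ?g s0) \<le> 0"
      using support_slope_mono[OF assms(1-6), of z s0] z assms by (simp add: right_diff_distrib)
    moreover have "sgn (b - 1) * (kc b s - kc b s0) \<le> 0"
      using kc_sgn_mono[of b s s0] 3 assms by (simp add: right_diff_distrib)
    moreover have "kc b (c * s) - kc b (c * s0) = kc_slope b c z * (kc b s - kc b s0)"
      using z(3) by (metis minus_diff_eq mult_minus_right)
    then have "\<epsilon> * sgn (b - 1) * (kc b (c * s) - kc b (c * s0) - ?g s0 * (kc b s - kc b s0))
        = (\<epsilon> * (?g z - ?g s0)) * (sgn (b - 1) * (kc b s - kc b s0))"
      using z assms by (intro chord) auto
    ultimately show ?thesis by (metis mult_nonpos_nonpos)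
  qed simp
qed

lemma support_slope_mono_in_height:
  assumes "\<epsilon> \<in> {-1, 1}" "0 \<le> \<epsilon> * ((b - 2) * (3 - b))" "0 < b" "b \<noteq> 1"
    and "0 \<le> c" "c \<le> 1" "0 \<le> s" "s \<le> 1/2" "0 \<le> s'" "s' \<le> 1/2"
    and "kc b s \<le> kc b s'"
  shows "\<epsilon> * sgn (b - 1) * support_slope \<epsilon> b c s \<le> \<epsilon> * sgn (b - 1) * support_slope \<epsilon> b c s'"
proof (cases "b > 1")
  case True
  have "s \<le> s'"
    using sgn_kc_diff[of b s' s] True assms by (cases "s' < s") (auto simp: sgn_1_pos)
  then show ?thesis
    using support_slope_mono[OF assms(1-7), of s'] True assms by simp
next
  case False
  have "s' \<le> s"
    using sgn_kc_diff[of b s s'] False assms by (cases "s < s'") (auto simp: sgn_1_neg)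
  then show ?thesis
    using support_slope_mono[OF assms(1-6,9), of s] False assms by simp
qed

section \<open>Majorization for step functions\<close>

definition overlap :: "(nat \<Rightarrow> real) \<Rightarrow> nat \<Rightarrow> real \<Rightarrow> real" where
  "overlap t i x = max 0 (min (x - t i) (t (Suc i) - t i))"

(* step_integral t h n x is the integral over [0, x] of the step function equal to h i on
   (t i, t (Suc i)], for i < n. *)
definition step_integral :: "(nat \<Rightarrow> real) \<Rightarrow> (nat \<Rightarrow> real) \<Rightarrow> nat \<Rightarrow> real \<Rightarrow> real" where
  "step_integral t h n x = (\<Sum>i<n. h i * overlap t i x)"

lemma overlap_mono: "t i \<le> t (Suc i) \<Longrightarrow> x \<le> y \<Longrightarrow> overlap t i x \<le> overlap t i y"
  unfolding overlap_def by (simp add: max_def min_def)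

lemma overlap_at_node:
  assumes "incseq t"
  shows "overlap t k (t j) = (if k < j then t (Suc k) - t k else 0)"
proof (cases "k < j")
  case True
  then have "t k \<le> t (Suc k)" "t (Suc k) \<le> t j"
    using incseqD[OF assms] by auto
  then show ?thesis using True unfolding overlap_def by (simp add: max_def min_def)
next
  case False
  then have "t j \<le> t k" using incseqD[OF assms] by simp
  then show ?thesis using False unfolding overlap_def by (simp add: max_def min_def)
qed

lemma sum_overlap:
  assumes "incseq t" "t 0 = 0" "0 \<le> x"
  shows "(\<Sum>i<n. overlap t i x) = min x (t n)"
proof (induction n)
  case (Suc n)
  moreover have "t n \<le> t (Suc n)" using incseqD[OF assms(1)] by simp
  ultimately show ?case unfolding overlap_def by (simp add: max_def min_def)
qed (use assms in simp)

lemma step_integral_at_node: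
  assumes "incseq t" "j \<le> n"
  shows "step_integral t h n (t j) = (\<Sum>k<j. h k * (t (Suc k) - t k))"
proof -
  have "step_integral t h n (t j) = (\<Sum>k\<in>{..<n} \<inter> {..<j}. h k * (t (Suc k) - t k))"
    unfolding step_integral_def overlap_at_node[OF assms(1)] sum.inter_restrict[OF finite_lessThan]
    by (intro sum.cong) auto
  also have "{..<n} \<inter> {..<j} = {..<j}" using assms(2) by auto
  finally show ?thesis .
qed

lemma summation_by_parts_nonneg:
  fixes g G :: "nat \<Rightarrow> real"
  assumes "\<And>j. Suc j < m \<Longrightarrow> g j \<le> g (Suc j)"
    and "G 0 = 0" "G m = 0" "\<And>j. j \<le> m \<Longrightarrow> G j \<le> 0"
  shows "0 \<le> (\<Sum>j<m. g j * (G (Suc j) - G j))"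
proof -
  have "g (k - 1) * G k \<le> (\<Sum>j<k. g j * (G (Suc j) - G j))" if "k \<le> m" for k
    using that
  proof (induction k)
    case (Suc k)
    show ?case
    proof (cases "k = 0")
      case False
      then have "g (k - 1) \<le> g k" "G k \<le> 0"
        using assms(1)[of "k - 1"] assms(4)[of k] Suc.prems by auto
      then have "0 \<le> (g (k - 1) - g k) * G k" by (simp add: mult_nonpos_nonpos)
      then show ?thesis using Suc by (simp add: algebra_simps)
    qed (use assms(2) in simp)
  qed (use assms(2) in simp)
  from this[of m] show ?thesis using assms(3) by simp
qed

lemma sum_overlap_increments:
  assumes t: "incseq t" "t 0 = 0" "t n = D" and u: "incseq u" "u 0 = 0" "u m = D"
  shows "i < n \<Longrightarrow> (\<Sum>j<m. overlap t i (u (Suc j)) - overlap t i (u j)) = t (Suc i) - t i"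
    and "j < m \<Longrightarrow> (\<Sum>i<n. overlap t i (u (Suc j)) - overlap t i (u j)) = u (Suc j) - u j"
proof -
  assume "i < n"
  then have "t i \<le> t (Suc i)" "0 \<le> t i" "t (Suc i) \<le> D"
    using incseqD[OF t(1), of 0 i] incseqD[OF t(1), of i "Suc i"] incseqD[OF t(1), of "Suc i" n] t(2,3)
    by auto
  then show "(\<Sum>j<m. overlap t i (u (Suc j)) - overlap t i (u j)) = t (Suc i) - t i"
    unfolding sum_lessThan_telescope[of "\<lambda>j. overlap t i (u j)"] u(2,3)
    by (simp add: overlap_def max_def min_def)
next
  assume "j < m"
  then have "0 \<le> u j" "u j \<le> u (Suc j)" "u (Suc j) \<le> D"
    using incseqD[OF u(1), of 0 j] incseqD[OF u(1), of j "Suc j"] incseqD[OF u(1), of "Suc j" m] u(2,3)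
    by auto
  then show "(\<Sum>i<n. overlap t i (u (Suc j)) - overlap t i (u j)) = u (Suc j) - u j"
    using sum_overlap[OF t(1,2)] t(3) by (simp add: sum_subtractf)
qed

lemma step_majorization:
  fixes t1 t2 h1 h2 v1 v2 g :: "nat \<Rightarrow> real"
  assumes t1: "incseq t1" "t1 0 = 0" "t1 n = D" and t2: "incseq t2" "t2 0 = 0" "t2 m = D"
    and g_mono: "\<And>j. Suc j < m \<Longrightarrow> g j \<le> g (Suc j)"
    and support: "\<And>i j. i < n \<Longrightarrow> j < m \<Longrightarrow> v2 j + g j * (h1 i - h2 j) \<le> v1 i"
    and dominated: "\<And>j. j \<le> m \<Longrightarrow> step_integral t1 h1 n (t2 j) \<le> step_integral t2 h2 m (t2 j)"
    and total: "step_integral t1 h1 n D = step_integral t2 h2 m D"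
  shows "(\<Sum>j<m. (t2 (Suc j) - t2 j) * v2 j) \<le> (\<Sum>i<n. (t1 (Suc i) - t1 i) * v1 i)"
proof -
  define \<Delta> where "\<Delta> i j = overlap t1 i (t2 (Suc j)) - overlap t1 i (t2 j)" for i j
  define G where "G j = step_integral t1 h1 n (t2 j) - step_integral t2 h2 m (t2 j)" for j
  note row = sum_overlap_increments(1)[OF t1 t2, folded \<Delta>_def]
    and column = sum_overlap_increments(2)[OF t1 t2, folded \<Delta>_def]
  have weighted_column: "(\<Sum>i<n. h1 i * \<Delta> i j) = G (Suc j) - G j + h2 j * (t2 (Suc j) - t2 j)"
    if "j < m" for j
    using step_integral_at_node[OF t2(1), of "Suc j" m h2] step_integral_at_node[OF t2(1), of j m h2] that
    by (simp add: G_def \<Delta>_def step_integral_def sum_subtractf right_diff_distrib)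
  have "0 \<le> (\<Sum>j<m. g j * (G (Suc j) - G j))"
  proof (rule summation_by_parts_nonneg[of m g])
    show "g j \<le> g (Suc j)" if "Suc j < m" for j using g_mono[OF that] .
    show "G 0 = 0"
      using step_integral_at_node[OF t1(1), of 0 n h1] step_integral_at_node[OF t2(1), of 0 m h2] t1(2) t2(2)
      by (simp add: G_def)
    show "G m = 0" using total t2(3) by (simp add: G_def)
    show "G j \<le> 0" if "j \<le> m" for j using dominated[OF that] by (simp add: G_def)
  qed
  have "(\<Sum>j<m. (t2 (Suc j) - t2 j) * v2 j) + (\<Sum>j<m. g j * (G (Suc j) - G j))
      = (\<Sum>j<m. (t2 (Suc j) - t2 j) * v2 j + g j * (G (Suc j) - G j))"
    by (simp add: sum.distrib)
  also have "\<dots> = (\<Sum>j<m. \<Sum>i<n. \<Delta> i j * (v2 j + g j * (h1 i - h2 j)))"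
  proof (rule sum.cong[OF refl])
    fix j assume "j \<in> {..<m}"
    then have j: "j < m" by simp
    have "(\<Sum>i<n. \<Delta> i j * (v2 j + g j * (h1 i - h2 j)))
        = (v2 j - g j * h2 j) * (\<Sum>i<n. \<Delta> i j) + g j * (\<Sum>i<n. h1 i * \<Delta> i j)"
      by (simp add: sum_distrib_left sum.distrib[symmetric] algebra_simps)
    then show "(t2 (Suc j) - t2 j) * v2 j + g j * (G (Suc j) - G j)
        = (\<Sum>i<n. \<Delta> i j * (v2 j + g j * (h1 i - h2 j)))"
      using column[OF j] weighted_column[OF j] by (simp add: algebra_simps)
  qed
  also have "\<dots> \<le> (\<Sum>j<m. \<Sum>i<n. \<Delta> i j * v1 i)"
    using support overlap_mono[of t1 _ "t2 _" "t2 (Suc _)"] incseqD[OF t1(1)] incseqD[OF t2(1)]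
    by (intro sum_mono mult_left_mono) (auto simp: \<Delta>_def)
  also have "\<dots> = (\<Sum>i<n. (t1 (Suc i) - t1 i) * v1 i)"
    by (subst sum.swap) (auto intro!: sum.cong simp: row simp flip: sum_distrib_right)
  finally show ?thesis
    using \<open>0 \<le> (\<Sum>j<m. g j * (G (Suc j) - G j))\<close> by linarith
qed

section \<open>BISO channels\<close>

definition pair_sibson :: "real \<Rightarrow> real \<Rightarrow> real \<times> real \<Rightarrow> real" where
  "pair_sibson \<alpha> q ab =
     (q * fst ab powr \<alpha> + (1 - q) * snd ab powr \<alpha>) powr (1 / \<alpha>)
   + (q * snd ab powr \<alpha> + (1 - q) * fst ab powr \<alpha>) powr (1 / \<alpha>)"

definition sibson_sum :: "real \<Rightarrow> nat \<Rightarrow> (int \<Rightarrow> real) \<Rightarrow> real \<Rightarrow> real" where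
  "sibson_sum \<alpha> l p q = (\<Sum>ab\<leftarrow>biso_pairs l p. pair_sibson \<alpha> q ab)"

definition pair_ratio :: "real \<Rightarrow> real \<times> real \<Rightarrow> real" where
  "pair_ratio \<alpha> ab = fst ab powr \<alpha> / (fst ab powr \<alpha> + snd ab powr \<alpha>)"

lemma pair_ratio_bounds: "0 \<le> pair_ratio \<alpha> ab \<and> pair_ratio \<alpha> ab \<le> 1"
proof (cases "fst ab powr \<alpha> + snd ab powr \<alpha> = 0")
  case False
  then have "0 < fst ab powr \<alpha> + snd ab powr \<alpha>"
    by (metis add_nonneg_nonneg order_less_le powr_ge_zero)
  then show ?thesis unfolding pair_ratio_def by (simp add: divide_le_eq_1)
qed (simp add: pair_ratio_def)

lemma pair_height_eq: "pair_height \<alpha> ab = kc (1 / \<alpha>) \<bar>pair_ratio \<alpha> ab - 1/2\<bar>"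
  unfolding pair_height_def pair_ratio_def kfun_eq_kc kc_abs ..

lemma pair_sibson_eq:
  assumes "0 \<le> fst ab" "0 \<le> snd ab" "0 \<le> q" "q \<le> 1" "0 < \<alpha>"
  shows "pair_sibson \<alpha> q ab = pair_width \<alpha> ab * kc (1 / \<alpha>) (\<bar>2 * q - 1\<bar> * \<bar>pair_ratio \<alpha> ab - 1/2\<bar>)"
proof -
  define A where "A = fst ab powr \<alpha>"
  define B where "B = snd ab powr \<alpha>"
  have AB: "0 \<le> A" "0 \<le> B" unfolding A_def B_def by auto
  show ?thesis
  proof (cases "A + B = 0")
    case True
    then have "A = 0" "B = 0" using AB by auto
    then have "fst ab = 0" "snd ab = 0" unfolding A_def B_def by auto
    then show ?thesis unfolding pair_sibson_def pair_width_def by simp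
  next
    case False
    define x where "x = A / (A + B)"
    define u where "u = q * x + (1 - q) * (1 - x)"
    have "1 - x = B / (A + B)" using False by (simp add: x_def field_simps)
    then have "u = (q * A + (1 - q) * B) / (A + B)"
      unfolding u_def by (simp add: x_def add_divide_distrib)
    then have "q * A + (1 - q) * B = (A + B) * u" "q * B + (1 - q) * A = (A + B) * (1 - u)"
      using False by (simp_all add: field_simps)
    moreover have "0 \<le> u" "u \<le> 1"
    proof -
      have "0 < A + B" using AB False by simp
      then have "0 \<le> x" "x \<le> 1" using AB by (auto simp: x_def divide_le_eq_1)
      then show "0 \<le> u" "u \<le> 1"
        using assms(3,4) unfolding u_def by (auto intro: convex_bound_le)
    qed
    ultimately have "pair_sibson \<alpha> q ab = (A + B) powr (1 / \<alpha>) * kc (1 / \<alpha>) (u - 1/2)"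
      using AB unfolding pair_sibson_def kc_def A_def[symmetric] B_def[symmetric]
      by (simp add: powr_mult distrib_left)
    also have "u - 1/2 = (2 * q - 1) * (x - 1/2)"
      unfolding u_def by (simp add: algebra_simps)
    finally show ?thesis
      unfolding pair_width_def pair_ratio_def A_def[symmetric] B_def[symmetric] x_def[symmetric]
      by (metis abs_mult kc_abs)
  qed
qed

lemma pair_width_mult_height:
  assumes "0 \<le> fst ab" "0 \<le> snd ab" "0 < \<alpha>"
  shows "pair_width \<alpha> ab * pair_height \<alpha> ab = fst ab + snd ab"
proof -
  have "pair_width \<alpha> ab * pair_height \<alpha> ab = pair_sibson \<alpha> 1 ab"
    using pair_sibson_eq[of ab 1 \<alpha>] assms by (simp add: pair_height_eq)
  also have "\<dots> = fst ab + snd ab"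
    using assms by (simp add: pair_sibson_def powr_powr)
  finally show ?thesis .
qed

lemma sum_symmetric_interval:
  fixes f :: "int \<Rightarrow> real"
  shows "(\<Sum>y\<in>{-int l..int l}. f y) = f 0 + (\<Sum>y\<in>{1..int l}. f y + f (-y))"
proof (induction l)
  case (Suc l)
  have "{-int (Suc l)..int (Suc l)} = insert (int l + 1) (insert (-(int l + 1)) {-int l..int l})"
    "{1..int (Suc l)} = insert (int l + 1) {1..int l}"
    by auto
  then show ?case using Suc by (simp add: algebra_simps)
qed simp

lemma sum_list_map_upto: "(\<Sum>y\<leftarrow>[1..int l]. f y) = (\<Sum>y\<in>{1..int l}. f y)"
  using sum_set_upto_conv_sum_list_int[of f 1 "int l"] by simp

lemma sibsonMI_eq_ln_sibson_sum:
  assumes "BISO l p" "0 < \<alpha>"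
  shows "sibsonMI \<alpha> l p q = \<alpha> / (\<alpha> - 1) * ln (sibson_sum \<alpha> l p q)"
proof -
  have "0 \<le> p 0" using assms(1) by (simp add: BISO_def)
  then have "(q * p 0 powr \<alpha> + (1 - q) * p 0 powr \<alpha>) powr (1 / \<alpha>) = pair_sibson \<alpha> q (p 0 / 2, p 0 / 2)"
    using assms(2) by (simp add: pair_sibson_def powr_powr algebra_simps)
  then have "(\<Sum>y\<in>{-int l..int l}. (q * chan p False y powr \<alpha> + (1 - q) * chan p True y powr \<alpha>) powr (1 / \<alpha>))
      = sibson_sum \<alpha> l p q"
    by (simp add: sum_symmetric_interval chan_def sibson_sum_def biso_pairs_def sum_list_map_upto
        pair_sibson_def o_def)
  then show ?thesis by (simp add: sibsonMI_def)
qed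

definition sorted_height :: "real \<Rightarrow> nat \<Rightarrow> (int \<Rightarrow> real) \<Rightarrow> nat \<Rightarrow> real" where
  "sorted_height \<alpha> l p k = pair_height \<alpha> (sorted_pairs \<alpha> l p ! k)"

definition sorted_deviation :: "real \<Rightarrow> nat \<Rightarrow> (int \<Rightarrow> real) \<Rightarrow> nat \<Rightarrow> real" where
  "sorted_deviation \<alpha> l p k = \<bar>pair_ratio \<alpha> (sorted_pairs \<alpha> l p ! k) - 1/2\<bar>"

lemma sorted_height_eq: "sorted_height \<alpha> l p k = kc (1 / \<alpha>) (sorted_deviation \<alpha> l p k)"
  unfolding sorted_height_def sorted_deviation_def by (rule pair_height_eq)

lemma sorted_deviation_bounds: "0 \<le> sorted_deviation \<alpha> l p k \<and> sorted_deviation \<alpha> l p k \<le> 1/2"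
  using pair_ratio_bounds[of \<alpha> "sorted_pairs \<alpha> l p ! k"] by (auto simp: sorted_deviation_def abs_if)

lemma sum_list_sorted_pairs:
  fixes f :: "real \<times> real \<Rightarrow> real"
  shows "(\<Sum>ab\<leftarrow>sorted_pairs \<alpha> l p. f ab) = (\<Sum>ab\<leftarrow>biso_pairs l p. f ab)"
  unfolding sum_mset_sum_list[symmetric] by (simp add: sorted_pairs_def)

lemma sorted_pairs_nonneg:
  assumes "BISO l p" "k < length (sorted_pairs \<alpha> l p)"
  shows "0 \<le> fst (sorted_pairs \<alpha> l p ! k) \<and> 0 \<le> snd (sorted_pairs \<alpha> l p ! k)"
proof -
  have "sorted_pairs \<alpha> l p ! k \<in> set (biso_pairs l p)"
    using nth_mem[OF assms(2)] by (simp add: sorted_pairs_def)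
  then show ?thesis using assms(1) by (auto simp: biso_pairs_def BISO_def)
qed

lemma tpt_0 [simp]: "tpt \<alpha> l p 0 = 0"
  by (simp add: tpt_def)

lemma tpt_Suc:
  "k < length (sorted_pairs \<alpha> l p) \<Longrightarrow>
   tpt \<alpha> l p (Suc k) = tpt \<alpha> l p k + pair_width \<alpha> (sorted_pairs \<alpha> l p ! k)"
  by (simp add: tpt_def take_Suc_conv_app_nth)

lemma incseq_tpt: "incseq (tpt \<alpha> l p)"
proof (rule incseq_SucI)
  fix k
  show "tpt \<alpha> l p k \<le> tpt \<alpha> l p (Suc k)"
  proof (cases "k < length (sorted_pairs \<alpha> l p)")
    case True
    then show ?thesis by (simp add: tpt_Suc pair_width_def)
  qed (simp add: tpt_def)
qed

lemma tpt_length: "tpt \<alpha> l p (length (sorted_pairs \<alpha> l p)) = dC \<alpha> l p"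
  by (simp add: tpt_def dC_def sum_list_sorted_pairs)

lemma tpt_bounds: "j \<le> length (sorted_pairs \<alpha> l p) \<Longrightarrow> 0 \<le> tpt \<alpha> l p j \<and> tpt \<alpha> l p j \<le> dC \<alpha> l p"
  using incseqD[OF incseq_tpt, of 0 j \<alpha> l p] incseqD[OF incseq_tpt, of j "length (sorted_pairs \<alpha> l p)" \<alpha> l p]
  by (simp add: tpt_length)

lemma sorted_height_mono:
  assumes "Suc j < length (sorted_pairs \<alpha> l p)"
  shows "sorted_height \<alpha> l p j \<le> sorted_height \<alpha> l p (Suc j)"
proof -
  have "sorted (map (pair_height \<alpha>) (sorted_pairs \<alpha> l p))"
    by (simp add: sorted_pairs_def)
  then show ?thesis
    using assms by (auto simp: sorted_height_def sorted_iff_nth_mono)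
qed

lemma sum_sorted_pairs_nth:
  fixes f :: "real \<times> real \<Rightarrow> real"
  shows "(\<Sum>ab\<leftarrow>biso_pairs l p. f ab) = (\<Sum>k<length (sorted_pairs \<alpha> l p). f (sorted_pairs \<alpha> l p ! k))"
  unfolding sum_list_sorted_pairs[of f \<alpha> l p, symmetric] by (simp add: sum_list_sum_nth lessThan_atLeast0)

lemma sibson_sum_sorted:
  assumes "BISO l p" "0 < \<alpha>" "0 \<le> q" "q \<le> 1"
  shows "sibson_sum \<alpha> l p q = (\<Sum>k<length (sorted_pairs \<alpha> l p).
     (tpt \<alpha> l p (Suc k) - tpt \<alpha> l p k) * kc (1 / \<alpha>) (\<bar>2 * q - 1\<bar> * sorted_deviation \<alpha> l p k))"
  unfolding sibson_sum_def sum_sorted_pairs_nth[of _ _ _ \<alpha>]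
  using pair_sibson_eq sorted_pairs_nonneg[OF assms(1)] assms(2-4)
  by (intro sum.cong) (auto simp: tpt_Suc sorted_deviation_def)

lemma sorted_heights_total:
  assumes "BISO l p" "0 < \<alpha>"
  shows "step_integral (tpt \<alpha> l p) (sorted_height \<alpha> l p) (length (sorted_pairs \<alpha> l p)) (dC \<alpha> l p) = 1"
proof -
  have "step_integral (tpt \<alpha> l p) (sorted_height \<alpha> l p) (length (sorted_pairs \<alpha> l p)) (dC \<alpha> l p)
      = (\<Sum>k<length (sorted_pairs \<alpha> l p). (\<lambda>ab. fst ab + snd ab) (sorted_pairs \<alpha> l p ! k))"
    unfolding tpt_length[symmetric] step_integral_at_node[OF incseq_tpt order.refl]
    using pair_width_mult_height sorted_pairs_nonneg[OF assms(1)] assms(2)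
    by (intro sum.cong) (auto simp: tpt_Suc sorted_height_def mult.commute)
  also have "\<dots> = (\<Sum>ab\<leftarrow>biso_pairs l p. fst ab + snd ab)"
    by (simp add: sum_sorted_pairs_nth[of _ _ _ \<alpha>])
  also have "\<dots> = p 0 + (\<Sum>y\<in>{1..int l}. p y + p (-y))"
    by (simp add: biso_pairs_def sum_list_map_upto o_def)
  also have "\<dots> = 1"
    using assms(1) sum_symmetric_interval[of p l] by (simp add: BISO_def)
  finally show ?thesis .
qed

lemma has_integral_indicator_Ioc:
  fixes a b t h :: real
  assumes "0 \<le> a" "a \<le> b" "0 \<le> t"
  shows "((\<lambda>s. if a < s \<and> s \<le> b then h else 0) has_integral h * max 0 (min (t - a) (b - a))) {0..t}"
proof -
  have Int: "{a..b} \<inter> {0..t} = {a..min b t}" using assms by auto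
  have "((\<lambda>s. if s \<in> {a..b} then h else 0) has_integral h * max 0 (min (t - a) (b - a))) {0..t}"
  proof (cases "a \<le> min b t")
    case True
    have "Henstock_Kurzweil_Integration.content {a..min b t} *\<^sub>R h = h * max 0 (min (t - a) (b - a))"
      using True by (auto simp: max_def min_def)
    then show ?thesis
      unfolding has_integral_restrict_Int Int using has_integral_const_real by metis
  next
    case False
    then have "t < a" using assms(2) by (simp add: min_def split: if_splits)
    then have "h * max 0 (min (t - a) (b - a)) = 0" by simp
    then show ?thesis
      unfolding has_integral_restrict_Int Int using False by auto
  qed
  then show ?thesis
    by (rule has_integral_spike[OF negligible_sing[of a], rotated]) auto
qed

lemma lorenz_eq_step_integral:
  assumes "0 \<le> t"
  shows "lorenz \<alpha> l p t = step_integral (tpt \<alpha> l p) (sorted_height \<alpha> l p) (length (sorted_pairs \<alpha> l p)) t"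
proof -
  let ?T = "tpt \<alpha> l p"
  have "(biso_curve \<alpha> l p has_integral
      step_integral ?T (sorted_height \<alpha> l p) (length (sorted_pairs \<alpha> l p)) t) {0..t}"
    unfolding biso_curve_def[abs_def] step_integral_def
  proof (rule has_integral_sum[OF finite_lessThan])
    fix k
    have "0 \<le> ?T k" "?T k \<le> ?T (Suc k)"
      using incseqD[OF incseq_tpt, of 0 k] incseqD[OF incseq_tpt, of k "Suc k"] by auto
    then show "((\<lambda>s. if ?T k < s \<and> s \<le> ?T (Suc k) then pair_height \<alpha> (sorted_pairs \<alpha> l p ! k) else 0)
        has_integral sorted_height \<alpha> l p k * overlap ?T k t) {0..t}"
      unfolding overlap_def sorted_height_def using assms by (rule has_integral_indicator_Ioc)
  qed
  then show ?thesis unfolding lorenz_def by (rule integral_unique)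
qed

lemma sgn_inverse_minus_one:
  fixes \<alpha> :: real
  assumes "0 < \<alpha>"
  shows "sgn (1 / \<alpha> - 1) = - sgn (\<alpha> - 1)"
proof -
  have "1 / \<alpha> - 1 = - (\<alpha> - 1) / \<alpha>" using assms by (simp add: field_simps)
  then show ?thesis using assms by (simp add: sgn_divide) (metis minus_diff_eq sgn_minus)
qed

lemma sibson_sum_pos:
  assumes "BISO l p" "0 < \<alpha>" "0 \<le> q" "q \<le> 1"
  shows "0 < sibson_sum \<alpha> l p q"
proof -
  let ?n = "length (sorted_pairs \<alpha> l p)" and ?w = "\<lambda>k. tpt \<alpha> l p (Suc k) - tpt \<alpha> l p k"
  have w: "0 \<le> ?w k" for k using incseqD[OF incseq_tpt, of k "Suc k"] by simp
  have kc_pos: "0 < kc b x" if "0 \<le> x" "x \<le> 1/2" for b x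
    using that by (simp add: kc_def add_pos_nonneg)
  have "\<exists>k<?n. 0 < ?w k"
  proof (rule ccontr)
    assume "\<not> (\<exists>k<?n. 0 < ?w k)"
    then have "?w k = 0" if "k < ?n" for k using that w[of k] by auto
    then show False
      using sorted_heights_total[OF assms(1,2)]
      by (simp add: tpt_length[symmetric] step_integral_at_node[OF incseq_tpt])
  qed
  then obtain k where k: "k < ?n" "0 < ?w k" by blast
  have kc_dev_pos: "0 < kc (1 / \<alpha>) (\<bar>2 * q - 1\<bar> * sorted_deviation \<alpha> l p j)" for j
  proof (rule kc_pos)
    show "0 \<le> \<bar>2 * q - 1\<bar> * sorted_deviation \<alpha> l p j"
      using sorted_deviation_bounds[of \<alpha> l p j] by simp
    have "\<bar>2 * q - 1\<bar> * sorted_deviation \<alpha> l p j \<le> 1 * (1/2)"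
      using sorted_deviation_bounds[of \<alpha> l p j] assms(3,4) by (intro mult_mono) auto
    then show "\<bar>2 * q - 1\<bar> * sorted_deviation \<alpha> l p j \<le> 1/2" by simp
  qed
  have "0 \<le> ?w j * kc (1 / \<alpha>) (\<bar>2 * q - 1\<bar> * sorted_deviation \<alpha> l p j)" for j
    using w[of j] kc_dev_pos[of j] by simp
  moreover have "0 < ?w k * kc (1 / \<alpha>) (\<bar>2 * q - 1\<bar> * sorted_deviation \<alpha> l p k)"
    using k(2) kc_dev_pos[of k] by simp
  ultimately show ?thesis
    unfolding sibson_sum_sorted[OF assms] using k(1) by (intro sum_pos2[of _ k]) auto
qed

lemma scaled_ln_mono:
  fixes \<alpha> x y :: real
  assumes "0 < \<alpha>" "0 < x" "0 < y" "sgn (\<alpha> - 1) * x \<le> sgn (\<alpha> - 1) * y"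
  shows "\<alpha> / (\<alpha> - 1) * ln x \<le> \<alpha> / (\<alpha> - 1) * ln y"
proof (cases \<alpha> "1::real" rule: linorder_cases)
  case less
  then have "ln y \<le> ln x" "\<alpha> / (\<alpha> - 1) \<le> 0"
    using assms by (simp_all add: divide_nonneg_neg)
  then show ?thesis by (rule mult_left_mono_neg)
next
  case greater
  then have "ln x \<le> ln y" "0 \<le> \<alpha> / (\<alpha> - 1)"
    using assms by simp_all
  then show ?thesis by (rule mult_left_mono)
qed simp

lemma sibson_sum_half:
  assumes "BISO l p" "0 < \<alpha>"
  shows "sibson_sum \<alpha> l p (1/2) = kc (1 / \<alpha>) 0 * dC \<alpha> l p"
proof -
  have "sibson_sum \<alpha> l p (1/2) = kc (1 / \<alpha>) 0 * (\<Sum>k<length (sorted_pairs \<alpha> l p). tpt \<alpha> l p (Suc k) - tpt \<alpha> l p k)"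
    by (simp add: sibson_sum_sorted[OF assms] sum_distrib_left mult.commute)
  then show ?thesis
    by (simp add: sum_lessThan_telescope tpt_length)
qed

lemma sibson_sum_le_half:
  assumes "BISO l p" "0 < \<alpha>" "0 \<le> q" "q \<le> 1"
  shows "sgn (\<alpha> - 1) * sibson_sum \<alpha> l p q \<le> sgn (\<alpha> - 1) * sibson_sum \<alpha> l p (1/2)"
proof -
  let ?w = "\<lambda>k. tpt \<alpha> l p (Suc k) - tpt \<alpha> l p k" and ?x = "\<lambda>k. \<bar>2 * q - 1\<bar> * sorted_deviation \<alpha> l p k"
  have "sgn (\<alpha> - 1) * (?w k * kc (1 / \<alpha>) (?x k)) \<le> sgn (\<alpha> - 1) * (?w k * kc (1 / \<alpha>) 0)" for k
  proof -
    have "?x k \<le> 1 * (1/2)"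
      using sorted_deviation_bounds[of \<alpha> l p k] assms(3,4) by (intro mult_mono) auto
    then have "0 \<le> sgn (1 / \<alpha> - 1) * (kc (1 / \<alpha>) (?x k) - kc (1 / \<alpha>) 0)"
      using sorted_deviation_bounds[of \<alpha> l p k] assms(2) by (intro kc_sgn_mono) auto
    then have "sgn (\<alpha> - 1) * kc (1 / \<alpha>) (?x k) \<le> sgn (\<alpha> - 1) * kc (1 / \<alpha>) 0"
      using assms(2) by (simp add: sgn_inverse_minus_one algebra_simps)
    moreover have "0 \<le> ?w k" using incseqD[OF incseq_tpt, of k "Suc k"] by simp
    ultimately show ?thesis
      by (metis mult.left_commute mult_left_mono)
  qed
  then show ?thesis
    by (simp add: sibson_sum_sorted[OF assms(1,2)] assms(3,4) sum_distrib_left sum_mono)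
qed

lemma sibsonMI_le_half:
  assumes "BISO l p" "0 < \<alpha>" "0 \<le> q" "q \<le> 1"
  shows "sibsonMI \<alpha> l p q \<le> sibsonMI \<alpha> l p (1/2)"
  unfolding sibsonMI_eq_ln_sibson_sum[OF assms(1,2)]
  using sibson_sum_le_half[OF assms] sibson_sum_pos[OF assms] sibson_sum_pos[OF assms(1,2), of "1/2"] assms(2)
  by (intro scaled_ln_mono) auto

lemma alpha_capacity_eq:
  assumes "BISO l p" "0 < \<alpha>"
  shows "alpha_capacity \<alpha> l p = \<alpha> / (\<alpha> - 1) * ln (kc (1 / \<alpha>) 0 * dC \<alpha> l p)"
proof -
  have "alpha_capacity \<alpha> l p = sibsonMI \<alpha> l p (1/2)"
    unfolding alpha_capacity_def by (rule cSup_eq_maximum) (use sibsonMI_le_half[OF assms] in auto)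
  then show ?thesis
    by (simp add: sibsonMI_eq_ln_sibson_sum[OF assms] sibson_sum_half[OF assms])
qed

lemma dC_eq_if_alpha_capacity_eq:
  assumes "BISO l1 p1" "BISO l2 p2" "0 < \<alpha>" "\<alpha> \<noteq> 1"
    and "alpha_capacity \<alpha> l1 p1 = alpha_capacity \<alpha> l2 p2"
  shows "dC \<alpha> l1 p1 = dC \<alpha> l2 p2"
proof -
  have pos: "0 < kc (1 / \<alpha>) 0 * dC \<alpha> l1 p1" "0 < kc (1 / \<alpha>) 0 * dC \<alpha> l2 p2"
    using sibson_sum_pos[OF assms(1,3), of "1/2"] sibson_sum_pos[OF assms(2,3), of "1/2"]
    by (simp_all add: sibson_sum_half[OF assms(1,3)] sibson_sum_half[OF assms(2,3)])
  have "\<alpha> / (\<alpha> - 1) \<noteq> 0" using assms(3,4) by simp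
  then have "ln (kc (1 / \<alpha>) 0 * dC \<alpha> l1 p1) = ln (kc (1 / \<alpha>) 0 * dC \<alpha> l2 p2)"
    using assms(5) by (simp add: alpha_capacity_eq[OF assms(1,3)] alpha_capacity_eq[OF assms(2,3)])
  then show ?thesis using pos by (simp add: kc_def)
qed

lemma sibson_sum_majorization:
  assumes B1: "BISO l1 p1" and B2: "BISO l2 p2" and \<alpha>: "0 < \<alpha>" "\<alpha> \<noteq> 1"
    and dC: "dC \<alpha> l1 p1 = dC \<alpha> l2 p2"
    and lorenz: "\<forall>t\<in>{0..dC \<alpha> l1 p1}. lorenz \<alpha> l1 p1 t \<le> lorenz \<alpha> l2 p2 t"
    and \<epsilon>: "\<epsilon> \<in> {-1, 1}" "0 \<le> \<epsilon> * ((1 / \<alpha> - 2) * (3 - 1 / \<alpha>))"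
    and q: "0 \<le> q" "q \<le> 1"
  shows "\<epsilon> * sgn (\<alpha> - 1) * sibson_sum \<alpha> l1 p1 q \<le> \<epsilon> * sgn (\<alpha> - 1) * sibson_sum \<alpha> l2 p2 q"
proof -
  define b where "b = 1 / \<alpha>"
  define c where "c = \<bar>2 * q - 1\<bar>"
  \<comment> \<open>\<kappa> = 1 if kc b (c * s) is a convex function of kc b s, and \<kappa> = -1 if it is concave.\<close>
  define \<kappa> where "\<kappa> = \<epsilon> * sgn (b - 1)"
  let ?T1 = "tpt \<alpha> l1 p1" and ?T2 = "tpt \<alpha> l2 p2"
  let ?n = "length (sorted_pairs \<alpha> l1 p1)" and ?m = "length (sorted_pairs \<alpha> l2 p2)"
  let ?s1 = "sorted_deviation \<alpha> l1 p1" and ?s2 = "sorted_deviation \<alpha> l2 p2"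
  let ?h1 = "sorted_height \<alpha> l1 p1" and ?h2 = "sorted_height \<alpha> l2 p2"
  let ?g = "\<lambda>j. \<kappa> * support_slope \<epsilon> b c (?s2 j)"
  have b: "0 \<le> \<epsilon> * ((b - 2) * (3 - b))" "0 < b" "b \<noteq> 1"
    using \<alpha> \<epsilon> by (auto simp: b_def)
  have c: "0 \<le> c" "c \<le> 1" using q by (auto simp: c_def)
  have h: "?h1 i = kc b (?s1 i)" "?h2 j = kc b (?s2 j)" for i j
    by (simp_all add: sorted_height_eq b_def)
  have T: "incseq ?T1" "?T1 0 = 0" "?T1 ?n = dC \<alpha> l1 p1" "incseq ?T2" "?T2 0 = 0" "?T2 ?m = dC \<alpha> l1 p1"
    by (simp_all add: incseq_tpt tpt_length dC)
  have g_mono: "?g j \<le> ?g (Suc j)" if "Suc j < ?m" for j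
    using sorted_height_mono[OF that] support_slope_mono_in_height[OF \<epsilon>(1) b c] sorted_deviation_bounds
    by (simp add: h \<kappa>_def)
  have support: "\<kappa> * kc b (c * ?s2 j) + ?g j * (?h1 i - ?h2 j) \<le> \<kappa> * kc b (c * ?s1 i)" for i j
    using support_line[OF \<epsilon>(1) b c, of "?s1 i" "?s2 j"] sorted_deviation_bounds
    by (simp add: h \<kappa>_def algebra_simps)
  have dominated: "step_integral ?T1 ?h1 ?n (?T2 j) \<le> step_integral ?T2 ?h2 ?m (?T2 j)" if "j \<le> ?m" for j
    using tpt_bounds[OF that] lorenz by (simp add: dC flip: lorenz_eq_step_integral)
  have total: "step_integral ?T1 ?h1 ?n (dC \<alpha> l1 p1) = step_integral ?T2 ?h2 ?m (dC \<alpha> l1 p1)"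
    using sorted_heights_total[OF B1 \<alpha>(1)] sorted_heights_total[OF B2 \<alpha>(1)] by (simp add: dC)
  from step_majorization[OF T g_mono support dominated total]
  have "(\<Sum>j<?m. (?T2 (Suc j) - ?T2 j) * (\<kappa> * kc b (c * ?s2 j)))
      \<le> (\<Sum>i<?n. (?T1 (Suc i) - ?T1 i) * (\<kappa> * kc b (c * ?s1 i)))" .
  then have "\<kappa> * sibson_sum \<alpha> l2 p2 q \<le> \<kappa> * sibson_sum \<alpha> l1 p1 q"
    by (simp add: sibson_sum_sorted[OF B1 \<alpha>(1) q] sibson_sum_sorted[OF B2 \<alpha>(1) q] sum_distrib_left
        b_def c_def mult.left_commute)
  then show ?thesis
    using \<alpha>(1) by (simp add: \<kappa>_def b_def sgn_inverse_minus_one)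
qed

lemma sibsonMI_majorization:
  assumes "BISO l1 p1" "BISO l2 p2" "0 < \<alpha>" "\<alpha> \<noteq> 1"
    and "dC \<alpha> l1 p1 = dC \<alpha> l2 p2"
    and "\<forall>t\<in>{0..dC \<alpha> l1 p1}. lorenz \<alpha> l1 p1 t \<le> lorenz \<alpha> l2 p2 t"
    and "\<epsilon> \<in> {-1, 1}" "0 \<le> \<epsilon> * ((1 / \<alpha> - 2) * (3 - 1 / \<alpha>))"
    and "0 \<le> q" "q \<le> 1"
  shows "\<epsilon> * sibsonMI \<alpha> l1 p1 q \<le> \<epsilon> * sibsonMI \<alpha> l2 p2 q"
proof -
  note major = sibson_sum_majorization[OF assms]
  note pos = sibson_sum_pos[OF assms(1,3,9,10)] sibson_sum_pos[OF assms(2,3,9,10)]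
  show ?thesis
    unfolding sibsonMI_eq_ln_sibson_sum[OF assms(1,3)] sibsonMI_eq_ln_sibson_sum[OF assms(2,3)]
    using assms(7) major pos scaled_ln_mono[OF assms(3)] by auto
qed

theorem theorem1:
  fixes \<alpha> :: real and l1 l2 :: nat and p1 p2 :: "int \<Rightarrow> real"
  assumes "\<alpha> > 0" and "\<alpha> \<noteq> 1"
    and "BISO l1 p1" and "BISO l2 p2"
    and "alpha_capacity \<alpha> l1 p1 = alpha_capacity \<alpha> l2 p2"
    and "\<forall>t\<in>{0..dC \<alpha> l1 p1}. lorenz \<alpha> l1 p1 t \<le> lorenz \<alpha> l2 p2 t"
  shows "((\<alpha> > 1 \<or> (1/2 \<le> \<alpha> \<and> \<alpha> < 1) \<or> \<alpha> \<le> 1/3) \<longrightarrow> more_capable \<alpha> l1 p1 l2 p2)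
    \<and> ((1/3 \<le> \<alpha> \<and> \<alpha> \<le> 1/2) \<longrightarrow> more_capable \<alpha> l2 p2 l1 p1)"
proof -
  have dC: "dC \<alpha> l1 p1 = dC \<alpha> l2 p2"
    using dC_eq_if_alpha_capacity_eq assms by blast
  note majorization = sibsonMI_majorization[OF assms(3,4,1,2) dC assms(6)]
  have "(1 / \<alpha> - 2) * (3 - 1 / \<alpha>) \<le> 0" if "\<alpha> > 1 \<or> (1/2 \<le> \<alpha> \<and> \<alpha> < 1) \<or> \<alpha> \<le> 1/3"
  proof -
    have "1 / \<alpha> \<le> 2 \<or> 3 \<le> 1 / \<alpha>"
      using that assms(1) by (auto simp: field_simps)
    then show ?thesis by (auto simp: mult_nonpos_nonneg mult_nonneg_nonpos)
  qed
  moreover have "0 \<le> (1 / \<alpha> - 2) * (3 - 1 / \<alpha>)" if "1/3 \<le> \<alpha> \<and> \<alpha> \<le> 1/2"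
    using that assms(1) by (intro mult_nonneg_nonneg) (auto simp: field_simps)
  ultimately show ?thesis
    unfolding more_capable_def using majorization[of "-1"] majorization[of 1] by auto
qed

end
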